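(* Define functions $v_n,\widetilde v_n:[0,1]\to\mathbb{R}$ for $n\ge 0$ by $v_0\equiv\widetilde v_0\equiv 0$ and, for $n\ge1$ and $0\le x\le 1$, $$ v_n(x)=(1-x)\,v_{n-1}(x)+\int_0^x \max\{v_{n-1}(x),\,1+v_{n-1}(x-y)\}\,dy, $$ $$ \widetilde v_n(x)=(1-x)\,\widetilde v_{n-1}(x)+\int_0^x \max\{\widetilde v_{n-1}(x),\,1+\widetilde v_{n-1}(y)\}\,dy. $$ Then $v_n(x)=\widetilde v_n(x)$ for all $n\ge 0$ and all $0\le x\le 1$.
   Context: These are the Bellman equations, for observations uniformly distributed on $[0,1]$, of the sequential knapsack problem (maximize the expected number of items selected with total size at most the capacity $x$) and of the sequential monotone decreasing subsequence selection problem (state $x$ = last selected value), respectively, with $n$ observations remaining. *)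

theory Defs
  imports "HOL-Analysis.Analysis"
begin

text \<open>Bellman value functions of the sequential knapsack problem (v) and of the
sequential monotone decreasing subsequence selection problem (v tilde),
for uniform observations on [0,1]. Only values on [0,1] matter.\<close>

primrec knapsack_v :: "nat \<Rightarrow> real \<Rightarrow> real" where
  "knapsack_v 0 = (\<lambda>x. 0)"
| "knapsack_v (Suc n) = (\<lambda>x. (1 - x) * knapsack_v n x
      + integral {0..x} (\<lambda>y. max (knapsack_v n x) (1 + knapsack_v n (x - y))))"

primrec decseq_v :: "nat \<Rightarrow> real \<Rightarrow> real" where
  "decseq_v 0 = (\<lambda>x. 0)"
| "decseq_v (Suc n) = (\<lambda>x. (1 - x) * decseq_v n x
      + integral {0..x} (\<lambda>y. max (decseq_v n x) (1 + decseq_v n y)))"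

end

theory Submission
  imports Defs
begin

text \<open>By induction on \<open>n\<close> the two recursions have the same integrand after the
substitution \<open>y \<mapsto> x - y\<close>, which maps \<open>[0,x]\<close> onto itself and preserves the integral.\<close>

lemma integral_reflect_Icc_real:
  fixes g :: "real \<Rightarrow> 'a::banach"
  shows "integral {a..b} (\<lambda>y. g (a + b - y)) = integral {a..b::real} g"
proof -
  have "integral {a..b} (\<lambda>y. g (a + b - y)) = integral {-b..-a} (\<lambda>z. g (a + b + z))"
    using Henstock_Kurzweil_Integration.integral_reflect_real[of "-a" "-b" "\<lambda>z. g (a + b + z)"]
    by (simp only: minus_minus diff_conv_add_uminus)
  also have "\<dots> = integral {-b + (a + b)..-a + (a + b)} g"
    using integral_shift_Icc_real[of "-b" "-a" g "a + b"] by (simp add: o_def)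
  finally show ?thesis by simp
qed

theorem proposition1:
  fixes n :: nat and x :: real
  assumes "0 \<le> x" and "x \<le> 1"
  shows "knapsack_v n x = decseq_v n x"
  using assms
proof (induction n arbitrary: x)
  case 0
  then show ?case by simp
next
  case (Suc n)
  let ?f = "\<lambda>y. max (decseq_v n x) (1 + decseq_v n y)"
  have "integral {0..x} (\<lambda>y. max (knapsack_v n x) (1 + knapsack_v n (x - y)))
        = integral {0..x} (\<lambda>y. ?f (x - y))"
    by (rule integral_cong) (use Suc in auto)
  also have "\<dots> = integral {0..x} ?f"
    using integral_reflect_Icc_real[of 0 x ?f] by simp
  finally show ?case using Suc by simp
qed

end
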